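(* Let $\mu$ be a probability measure on $\mathbb{R}^K$ with density $m$ with respect to Lebesgue measure, and let $\gamma(dx)=q(x)dx$ be a probability measure on $\mathbb{R}^K$ such that $\gamma$ satisfies a logarithmic Sobolev inequality with constant $\alpha>0$ and there is $\kappa\ge1$ with $m(x)\le\kappa q(x)$ for all $x\in\mathbb{R}^K$. Then for every Lipschitz continuous $F:\mathbb{R}^K\to\mathbb{R}$ with $|\nabla F|_\infty\le1$ and $Y\sim\mu$, $$\forall r>0,\quad \mathbb{P}_\mu\left[F(Y)-\mu(F)\ge r+W_1(\mu,\gamma)\right]\le\kappa e^{-\frac{r^2}{\alpha}}.$$
   Context: $\gamma$ satisfies a logarithmic Sobolev inequality with constant $\alpha$ if for all $f\in H^1(d\gamma)=\{g\in L^2(d\gamma):\int|\nabla g|^2d\gamma<\infty\}$ with $f\ge0$, $\mathrm{Ent}_\gamma(f^2)\le\alpha\int|\nabla f|^2d\gamma$, where $\mathrm{Ent}_\gamma(\phi)=\int\phi\log\phi\,d\gamma-(\int\phi\,d\gamma)\log(\int\phi\,d\gamma)$. $|\nabla F|_\infty$ is the essential supremum of the Euclidean norm of the a.e.-defined gradient. $\mu(F)=\int F\,d\mu$. $W_1(\mu,\gamma)=\sup_{|\nabla F|_\infty\le1}|\mu(F)-\gamma(F)|$. *)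

theory Defs
  imports "HOL-Probability.Probability"
begin

definition test_fun :: "('a::euclidean_space \<Rightarrow> real) \<Rightarrow> ('a \<Rightarrow> 'a) \<Rightarrow> bool" where
  "test_fun \<phi> d\<phi> \<longleftrightarrow>
     (\<forall>x. (\<phi> has_derivative (\<lambda>h. d\<phi> x \<bullet> h)) (at x)) \<and>
     continuous_on UNIV d\<phi> \<and> bounded {x. \<phi> x \<noteq> 0}"

definition weak_gradient :: "('a::euclidean_space \<Rightarrow> real) \<Rightarrow> ('a \<Rightarrow> 'a) \<Rightarrow> bool" where
  "weak_gradient f g \<longleftrightarrow>
     f \<in> borel_measurable borel \<and> g \<in> borel_measurable borel \<and>
     (\<forall>K. compact K \<longrightarrow> set_integrable lborel K f \<and> set_integrable lborel K g) \<and>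
     (\<forall>\<phi> d\<phi>. test_fun \<phi> d\<phi> \<longrightarrow>
        (\<forall>i\<in>Basis. (\<integral>x. f x * (d\<phi> x \<bullet> i) \<partial>lborel) = - (\<integral>x. (g x \<bullet> i) * \<phi> x \<partial>lborel)))"

definition Ent :: "'a measure \<Rightarrow> ('a \<Rightarrow> real) \<Rightarrow> real" where
  "Ent \<gamma> \<phi> = (\<integral>x. \<phi> x * ln (\<phi> x) \<partial>\<gamma>) - (\<integral>x. \<phi> x \<partial>\<gamma>) * ln (\<integral>x. \<phi> x \<partial>\<gamma>)"

text \<open>The entropy is required
  to be finite (the entropy of f^2 is always well defined in (-inf,+inf]).\<close>
definition LSI :: "'a::euclidean_space measure \<Rightarrow> real \<Rightarrow> bool" where
  "LSI \<gamma> \<alpha> \<longleftrightarrow>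
     (\<forall>f g. (\<forall>x. f x \<ge> 0) \<longrightarrow> weak_gradient f g \<longrightarrow>
        integrable \<gamma> (\<lambda>x. (f x)\<^sup>2) \<longrightarrow> integrable \<gamma> (\<lambda>x. (norm (g x))\<^sup>2) \<longrightarrow>
        integrable \<gamma> (\<lambda>x. (f x)\<^sup>2 * ln ((f x)\<^sup>2)) \<and>
        Ent \<gamma> (\<lambda>x. (f x)\<^sup>2) \<le> \<alpha> * (\<integral>x. (norm (g x))\<^sup>2 \<partial>\<gamma>))"

text \<open>F is Lipschitz and |grad F|_infty \<le> c (essential sup of the norm of the a.e. gradient).\<close>
definition lip_grad_le :: "('a::euclidean_space \<Rightarrow> real) \<Rightarrow> real \<Rightarrow> bool" where
  "lip_grad_le F c \<longleftrightarrow> (\<exists>L. L-lipschitz_on UNIV F) \<and>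
     (AE x in lborel. F differentiable (at x) \<and> onorm (frechet_derivative F (at x)) \<le> c)"

definition W1 :: "'a::euclidean_space measure \<Rightarrow> 'a measure \<Rightarrow> ereal" where
  "W1 \<mu> \<gamma> = (SUP F \<in> {F. lip_grad_le F 1}.
      (if integrable \<mu> F \<and> integrable \<gamma> F
       then ereal \<bar>(\<integral>x. F x \<partial>\<mu>) - (\<integral>x. F x \<partial>\<gamma>)\<bar> else \<infinity>))"

end

theory Submission
  imports Defs
begin

text \<open>
  By the density bound, \<open>\<mu>(T) \<le> \<kappa> \<gamma>(T)\<close> for every Borel set \<open>T\<close>, and since
  \<open>|\<mu>(F) - \<gamma>(F)| \<le> W\<^sub>1(\<mu>, \<gamma>)\<close> the event in question is contained in
  \<open>T = {F - \<gamma>(F) \<ge> r}\<close>. So it suffices to prove the Gaussian concentration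
  \<open>\<gamma>(T) \<le> exp (- r\<^sup>2 / \<alpha>)\<close>, which is Herbst's argument: applying the logarithmic Sobolev
  inequality to \<open>exp (\<lambda> F / 2)\<close> yields a differential inequality for the moment generating
  function \<open>H(\<lambda>)\<close> of \<open>F\<close> which integrates to \<open>H(\<lambda>) \<le> exp (\<lambda> \<gamma>(F) + \<alpha> \<lambda>\<^sup>2 / 4)\<close>, and
  Chernoff's bound with \<open>\<lambda> = 2 r / \<alpha>\<close> concludes. This needs \<open>F\<close> bounded, which is arranged
  by truncating with \<open>arctan\<close>, and it needs a weak gradient of \<open>exp (\<lambda> F / 2)\<close>: a Lipschitz
  function whose pointwise gradient exists almost everywhere has that gradient as weak gradient,
  by integrating difference quotients by parts.
\<close>

lemma exp_lipschitz_on_atMost: "(exp a)-lipschitz_on {..a} exp"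
proof (rule bounded_derivative_imp_lipschitz)
  show "(exp has_derivative (\<lambda>h. exp x * h)) (at x within {..a})" for x :: real
    using DERIV_exp[of x] unfolding has_field_derivative_def by (rule has_derivative_at_withinI)
  show "onorm (\<lambda>h. exp x * h) \<le> exp a" if "x \<in> {..a}" for x :: real
    using that by (intro onorm_le) (simp add: abs_mult mult_right_mono)
qed auto

lemma arctan_lipschitz: "1-lipschitz_on UNIV arctan"
proof (rule bounded_derivative_imp_lipschitz)
  show "(arctan has_derivative (\<lambda>h. inverse (1 + x\<^sup>2) * h)) (at x within UNIV)" for x :: real
    using DERIV_arctan[of x] unfolding has_field_derivative_def by simp
  show "onorm (\<lambda>h. inverse (1 + x\<^sup>2) * h) \<le> 1" for x :: real
    by (intro onorm_le) (simp add: abs_mult mult_left_le_one_le inverse_le_1_iff)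
qed auto

lemma abs_scaled_arctan_diff_le:
  assumes "c > 0"
  shows "\<bar>c * arctan (a / c) - c * arctan (b / c)\<bar> \<le> \<bar>a - b\<bar>"
proof -
  have "\<bar>c * arctan (a / c) - c * arctan (b / c)\<bar> = c * \<bar>arctan (a / c) - arctan (b / c)\<bar>"
    using assms by (simp add: abs_mult flip: right_diff_distrib)
  also have "\<dots> \<le> c * \<bar>a / c - b / c\<bar>"
    using lipschitz_onD[OF arctan_lipschitz, of "a / c" "b / c"] assms by (simp add: dist_real_def)
  also have "\<dots> = \<bar>a - b\<bar>"
    using assms by (simp add: abs_divide flip: diff_divide_distrib)
  finally show ?thesis .
qed

lemma LIMSEQ_difference_quotient:
  fixes f :: "real \<Rightarrow> real"
  assumes "(f has_real_derivative D) (at x)" "s \<longlonglongrightarrow> 0" "\<And>n. s n \<noteq> 0"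
  shows "(\<lambda>n. (f (x + s n) - f x) / s n) \<longlonglongrightarrow> D"
proof -
  have "((\<lambda>y. (f y - f x) / (y - x)) \<longlongrightarrow> D) (at x)"
    using assms(1) has_field_derivative_iff by blast
  moreover have "(\<lambda>n. x + s n) \<longlonglongrightarrow> x"
    using tendsto_add[OF tendsto_const assms(2)] by simp
  ultimately have "((\<lambda>y. (f y - f x) / (y - x)) \<circ> (\<lambda>n. x + s n)) \<longlonglongrightarrow> D"
    using assms(3) unfolding tendsto_at_iff_sequentially by auto
  then show ?thesis by (simp add: comp_def)
qed

lemma LIMSEQ_directional_difference_quotient:
  fixes F :: "'a::real_normed_vector \<Rightarrow> real"
  assumes "(F has_derivative D) (at x)" "s \<longlonglongrightarrow> 0" "\<And>n. s n \<noteq> 0"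
  shows "(\<lambda>n. (F (x + s n *\<^sub>R v) - F x) / s n) \<longlonglongrightarrow> D v"
proof -
  have lin: "linear D" using assms(1) has_derivative_linear by blast
  have "((\<lambda>t. x + t *\<^sub>R v) has_derivative (\<lambda>t. t *\<^sub>R v)) (at 0)"
    by (auto intro!: derivative_eq_intros)
  then have "((\<lambda>t. F (x + t *\<^sub>R v)) has_derivative (\<lambda>t. D (t *\<^sub>R v))) (at 0)"
    using has_derivative_compose[of "\<lambda>t. x + t *\<^sub>R v" _ 0 UNIV F D] assms(1) by (simp add: comp_def)
  then have "((\<lambda>t. F (x + t *\<^sub>R v)) has_real_derivative D v) (at 0)"
    unfolding has_field_derivative_def linear.scaleR[OF lin] by (simp add: mult.commute[of _ "D v"])
  from LIMSEQ_difference_quotient[OF this assms(2,3)] show ?thesis by simp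
qed

lemma LIMSEQ_scaled_arctan: "(\<lambda>n. real (Suc n) * arctan (y / real (Suc n))) \<longlonglongrightarrow> y"
proof (cases "y = 0")
  case False
  define s where "s n = y / real (Suc n)" for n
  have "s \<longlonglongrightarrow> 0"
    unfolding s_def using tendsto_mult[OF tendsto_const[of y] LIMSEQ_inverse_real_of_nat]
    by (simp add: divide_inverse)
  moreover have "s n \<noteq> 0" for n
    unfolding s_def using False by simp
  ultimately have "(\<lambda>n. (arctan (0 + s n) - arctan 0) / s n) \<longlonglongrightarrow> inverse (1 + 0\<^sup>2)"
    by (intro LIMSEQ_difference_quotient DERIV_arctan)
  then have "(\<lambda>n. y * (arctan (s n) / s n)) \<longlonglongrightarrow> y * 1"
    by (intro tendsto_intros) simp
  moreover have "y * (arctan (s n) / s n) = real (Suc n) * arctan (y / real (Suc n))" for n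
    unfolding s_def using False by (simp add: field_simps)
  ultimately show ?thesis by simp
qed simp

lemma lip_grad_le_has_derivative:
  assumes "lip_grad_le F c"
  shows "AE x in lborel. \<exists>D. (F has_derivative D) (at x) \<and> (\<forall>h. \<bar>D h\<bar> \<le> c * norm h)"
proof -
  have "AE x in lborel. F differentiable at x \<and> onorm (frechet_derivative F (at x)) \<le> c"
    using assms unfolding lip_grad_le_def by blast
  then show ?thesis
  proof eventually_elim
    case (elim x)
    then have D: "(F has_derivative frechet_derivative F (at x)) (at x)"
      using frechet_derivative_works by blast
    have "\<bar>frechet_derivative F (at x) h\<bar> \<le> c * norm h" for h
      using onorm[OF has_derivative_bounded_linear[OF D], of h] elim
      by (metis norm_ge_zero mult_right_mono order_trans real_norm_def)
    with D show ?case by blast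
  qed
qed

lemma lip_grad_leI:
  assumes "L-lipschitz_on UNIV F"
    and "AE x in lborel. \<exists>D. (F has_derivative D) (at x) \<and> (\<forall>h. \<bar>D h\<bar> \<le> c * norm h)"
  shows "lip_grad_le F c"
  unfolding lip_grad_le_def
proof (intro conjI exI)
  show "L-lipschitz_on UNIV F" by fact
  show "AE x in lborel. F differentiable at x \<and> onorm (frechet_derivative F (at x)) \<le> c"
    using assms(2)
  proof eventually_elim
    case (elim x)
    then obtain D where "(F has_derivative D) (at x)" "\<And>h. \<bar>D h\<bar> \<le> c * norm h" by blast
    then show ?case
      by (auto simp: differentiable_def frechet_derivative_at[symmetric] intro: onorm_le)
  qed
qed

lemma lip_grad_le_continuous:
  assumes "lip_grad_le F c"
  shows "continuous_on UNIV F"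
  using assms lipschitz_on_continuous_on unfolding lip_grad_le_def by blast

text \<open>Unlike \<open>frechet_derivative\<close>, this gradient is Borel measurable by construction.\<close>

definition diff_quotient_partial :: "('a::euclidean_space \<Rightarrow> real) \<Rightarrow> 'a \<Rightarrow> 'a \<Rightarrow> real" where
  "diff_quotient_partial G i x =
     lim (\<lambda>n. (G (x + inverse (real (Suc n)) *\<^sub>R i) - G x) / inverse (real (Suc n)))"

definition diff_quotient_grad :: "('a::euclidean_space \<Rightarrow> real) \<Rightarrow> 'a \<Rightarrow> 'a" where
  "diff_quotient_grad G x = (\<Sum>i\<in>Basis. diff_quotient_partial G i x *\<^sub>R i)"

lemma diff_quotient_grad_measurable [measurable]:
  assumes [measurable]: "G \<in> borel_measurable borel"
  shows "diff_quotient_grad G \<in> borel_measurable borel"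
  unfolding diff_quotient_grad_def diff_quotient_partial_def by measurable

lemma has_derivative_diff_quotient_grad:
  fixes G :: "'a::euclidean_space \<Rightarrow> real"
  assumes d: "(G has_derivative D) (at x)"
  shows "D = (\<lambda>h. diff_quotient_grad G x \<bullet> h)"
proof
  fix h
  have lin: "linear D" using d has_derivative_linear by blast
  have partial: "diff_quotient_partial G i x = D i" for i
    unfolding diff_quotient_partial_def
    by (intro limI LIMSEQ_directional_difference_quotient[OF d LIMSEQ_inverse_real_of_nat]) simp
  have "D h = D (\<Sum>i\<in>Basis. (h \<bullet> i) *\<^sub>R i)" by (simp only: euclidean_representation)
  also have "\<dots> = (\<Sum>i\<in>Basis. (h \<bullet> i) * D i)"
    by (simp add: linear_sum[OF lin] linear.scaleR[OF lin])
  also have "\<dots> = diff_quotient_grad G x \<bullet> h"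
    unfolding diff_quotient_grad_def inner_sum_left inner_scaleR_left partial
    by (simp add: inner_commute mult.commute)
  finally show "D h = diff_quotient_grad G x \<bullet> h" .
qed

section \<open>Weak gradients of Lipschitz functions\<close>

lemma test_fun_lipschitz:
  fixes \<phi> :: "'a::euclidean_space \<Rightarrow> real"
  assumes "test_fun \<phi> d\<phi>"
  obtains M where "M-lipschitz_on UNIV \<phi>"
proof -
  have der: "\<And>x. (\<phi> has_derivative (\<lambda>h. d\<phi> x \<bullet> h)) (at x)" and "continuous_on UNIV d\<phi>"
    and "bounded {x. \<phi> x \<noteq> 0}"
    using assms unfolding test_fun_def by auto
  obtain R where R: "\<And>x. R < norm x \<Longrightarrow> \<phi> x = 0"
    using \<open>bounded {x. \<phi> x \<noteq> 0}\<close> unfolding bounded_iff by (meson mem_Collect_eq not_less)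
  have outside: "d\<phi> x = 0" if "R < norm x" for x
  proof -
    have "open {y::'a. R < norm y}" by (intro open_Collect_less continuous_intros)
    with has_derivative_const have "(\<phi> has_derivative (\<lambda>h. 0)) (at x)"
      by (rule has_derivative_transform_within_open) (use that R in auto)
    then have "(\<lambda>h. d\<phi> x \<bullet> h) = (\<lambda>h. 0)" by (rule has_derivative_unique[OF der])
    from fun_cong[OF this, of "d\<phi> x"] show ?thesis by simp
  qed
  have "bounded (d\<phi> ` cball 0 R)"
    by (intro compact_imp_bounded compact_continuous_image
        continuous_on_subset[OF \<open>continuous_on UNIV d\<phi>\<close>]) auto
  then obtain M where M: "\<And>y. y \<in> d\<phi> ` cball 0 R \<Longrightarrow> norm y \<le> M" "M \<ge> 0"
    by (meson bounded_pos less_imp_le)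
  have d\<phi>_le: "norm (d\<phi> x) \<le> M" for x
    using M(1)[of "d\<phi> x"] M(2) outside[of x] by (cases "norm x \<le> R") auto
  have "norm (d\<phi> x \<bullet> h) \<le> M * norm h" for x h
    using Cauchy_Schwarz_ineq2[of "d\<phi> x" h] mult_right_mono[OF d\<phi>_le[of x] norm_ge_zero[of h]]
    by simp
  then have "M-lipschitz_on UNIV \<phi>"
    using der \<open>M \<ge> 0\<close> by (intro bounded_derivative_imp_lipschitz onorm_le) auto
  then show thesis by (rule that)
qed

lemma integrable_lborel_bounded_support:
  fixes h :: "'a::euclidean_space \<Rightarrow> real"
  assumes "continuous_on UNIV h" "bounded {x. h x \<noteq> 0}"
  shows "integrable lborel h"
proof -
  obtain R where R: "\<And>x. h x \<noteq> 0 \<Longrightarrow> norm x \<le> R"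
    using assms(2) unfolding bounded_iff by auto
  have "integrable lborel (\<lambda>x. indicator (cball 0 R) x *\<^sub>R h x)"
    using continuous_on_subset[OF assms(1)] by (intro borel_integrable_compact) auto
  also have "(\<lambda>x. indicator (cball 0 R) x *\<^sub>R h x) = h"
    using R by (force simp: indicator_def)
  finally show ?thesis .
qed

lemma lborel_integral_translate:
  fixes h :: "'a::euclidean_space \<Rightarrow> real"
  assumes [measurable]: "h \<in> borel_measurable borel"
  shows "(\<integral>x. h (x + c) \<partial>lborel) = (\<integral>x. h x \<partial>lborel)"
proof -
  have "(\<integral>x. h x \<partial>lborel) = (\<integral>x. h x \<partial>distr lborel borel ((+) c))"
    by (simp add: lborel_distr_plus)
  also have "\<dots> = (\<integral>x. h (c + x) \<partial>lborel)"
    by (rule integral_distr) auto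
  finally show ?thesis by (simp add: add.commute)
qed

lemma bounded_support_shift:
  fixes \<phi> :: "'a::real_normed_vector \<Rightarrow> real"
  assumes "bounded {x. \<phi> x \<noteq> 0}"
  shows "bounded {x. f x * \<phi> (x + b) \<noteq> 0}"
proof -
  obtain R where R: "\<And>x. \<phi> x \<noteq> 0 \<Longrightarrow> norm x \<le> R"
    using assms unfolding bounded_iff by auto
  have "norm x \<le> R + norm b" if "\<phi> (x + b) \<noteq> 0" for x
    using R[OF that] norm_triangle_ineq4[of "x + b" b] by simp
  then show ?thesis unfolding bounded_iff by auto
qed

lemma lborel_integral_mult_diff_quotient_shift:
  fixes f \<phi> :: "'a::euclidean_space \<Rightarrow> real"
  assumes f: "continuous_on UNIV f" and \<phi>: "continuous_on UNIV \<phi>" "bounded {x. \<phi> x \<noteq> 0}"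
  shows "(\<integral>x. f x * ((\<phi> (x + c) - \<phi> x) / t) \<partial>lborel)
       = (\<integral>x. ((f (x - c) - f x) / t) * \<phi> x \<partial>lborel)"
proof -
  have [measurable]: "f \<in> borel_measurable borel" "\<phi> \<in> borel_measurable borel"
    using f \<phi> by (auto intro: borel_measurable_continuous_onI)
  have int: "integrable lborel (\<lambda>x. f (x + a) * \<phi> (x + b))" for a b
  proof (rule integrable_lborel_bounded_support)
    show "continuous_on UNIV (\<lambda>x. f (x + a) * \<phi> (x + b))"
      by (intro continuous_intros continuous_on_compose2[OF f] continuous_on_compose2[OF \<phi>(1)]) auto
  qed (rule bounded_support_shift[OF \<phi>(2)])
  have "(\<integral>x. f x * ((\<phi> (x + c) - \<phi> x) / t) \<partial>lborel)
      = ((\<integral>x. f x * \<phi> (x + c) \<partial>lborel) - (\<integral>x. f x * \<phi> x \<partial>lborel)) / t"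
    using int[of 0 c] int[of 0 0] by (simp add: right_diff_distrib)
  also have "(\<integral>x. f x * \<phi> (x + c) \<partial>lborel) = (\<integral>x. f (x - c) * \<phi> x \<partial>lborel)"
    using lborel_integral_translate[of "\<lambda>x. f (x - c) * \<phi> x" c] by simp
  also have "((\<integral>x. f (x - c) * \<phi> x \<partial>lborel) - (\<integral>x. f x * \<phi> x \<partial>lborel)) / t
      = (\<integral>x. ((f (x - c) - f x) / t) * \<phi> x \<partial>lborel)"
    using int[of "- c" 0] int[of 0 0] by (simp add: left_diff_distrib)
  finally show ?thesis .
qed

lemma LIMSEQ_integral_mult_diff_quotient:
  fixes f \<phi> :: "'a::euclidean_space \<Rightarrow> real"
  assumes f: "continuous_on UNIV f" and \<phi>: "test_fun \<phi> d\<phi>"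
    and t: "t \<longlonglongrightarrow> 0" "\<And>n. t n \<noteq> 0" "\<And>n. \<bar>t n\<bar> \<le> 1"
  shows "(\<lambda>n. \<integral>x. f x * ((\<phi> (x + t n *\<^sub>R v) - \<phi> x) / t n) \<partial>lborel)
         \<longlonglongrightarrow> (\<integral>x. f x * (d\<phi> x \<bullet> v) \<partial>lborel)"
proof -
  obtain M where M: "M-lipschitz_on UNIV \<phi>"
    using test_fun_lipschitz[OF \<phi>] by blast
  have der: "\<And>x. (\<phi> has_derivative (\<lambda>h. d\<phi> x \<bullet> h)) (at x)" and "continuous_on UNIV d\<phi>"
    and "bounded {x. \<phi> x \<noteq> 0}"
    using \<phi> unfolding test_fun_def by auto
  then obtain R where R: "\<And>x. \<phi> x \<noteq> 0 \<Longrightarrow> norm x \<le> R"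
    unfolding bounded_iff by auto
  have [measurable]: "f \<in> borel_measurable borel" "\<phi> \<in> borel_measurable borel"
    "d\<phi> \<in> borel_measurable borel"
    using f M \<open>continuous_on UNIV d\<phi>\<close>
    by (auto intro: borel_measurable_continuous_onI lipschitz_on_continuous_on)
  define S where "S = cball (0::'a) (R + norm v)"
  have bound: "\<bar>f x * ((\<phi> (x + t n *\<^sub>R v) - \<phi> x) / t n)\<bar> \<le> indicator S x * (M * norm v * \<bar>f x\<bar>)"
    for n x
  proof (cases "x \<in> S")
    case True
    have "\<bar>\<phi> (x + t n *\<^sub>R v) - \<phi> x\<bar> \<le> M * (\<bar>t n\<bar> * norm v)"
      using lipschitz_onD[OF M, of "x + t n *\<^sub>R v" x] by (simp add: dist_real_def dist_norm)
    then have "\<bar>(\<phi> (x + t n *\<^sub>R v) - \<phi> x) / t n\<bar> \<le> M * norm v"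
      using t(2)[of n] by (simp add: abs_divide divide_le_eq mult_ac)
    then have "\<bar>f x * ((\<phi> (x + t n *\<^sub>R v) - \<phi> x) / t n)\<bar> \<le> \<bar>f x\<bar> * (M * norm v)"
      unfolding abs_mult by (rule mult_left_mono) simp
    then show ?thesis
      using True by (simp add: mult_ac)
  next
    case False
    then have "R < norm x - \<bar>t n\<bar> * norm v"
      using t(3)[of n] mult_right_mono[OF t(3)[of n] norm_ge_zero[of v]] by (simp add: S_def)
    also have "\<dots> \<le> norm (x + t n *\<^sub>R v)"
      using norm_triangle_ineq2[of x "x + t n *\<^sub>R v"] by simp
    finally have "\<phi> (x + t n *\<^sub>R v) = 0"
      using R[of "x + t n *\<^sub>R v"] by force
    moreover have "\<phi> x = 0"
      using False R[of x] norm_ge_zero[of v] by (force simp: S_def)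
    ultimately show ?thesis
      using False by simp
  qed
  show ?thesis
  proof (rule integral_dominated_convergence)
    show "integrable lborel (\<lambda>x. indicator S x * (M * norm v * \<bar>f x\<bar>))"
      using borel_integrable_compact[of S "\<lambda>x. M * norm v * \<bar>f x\<bar>"]
      by (simp add: S_def continuous_intros continuous_on_subset[OF f])
    show "AE x in lborel. (\<lambda>n. f x * ((\<phi> (x + t n *\<^sub>R v) - \<phi> x) / t n)) \<longlonglongrightarrow> f x * (d\<phi> x \<bullet> v)"
      by (intro AE_I2 tendsto_mult tendsto_const LIMSEQ_directional_difference_quotient[OF der t(1,2)])
    show "AE x in lborel. norm (f x * ((\<phi> (x + t n *\<^sub>R v) - \<phi> x) / t n))
        \<le> indicator S x * (M * norm v * \<bar>f x\<bar>)" for n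
      using bound by simp
  qed auto
qed

lemma LIMSEQ_integral_diff_quotient_mult:
  fixes f \<phi> :: "'a::euclidean_space \<Rightarrow> real"
  assumes f: "L-lipschitz_on UNIV f" and [measurable]: "g \<in> borel_measurable borel"
    and der: "AE x in lborel. (f has_derivative (\<lambda>h. g x \<bullet> h)) (at x)"
    and \<phi>: "continuous_on UNIV \<phi>" "bounded {x. \<phi> x \<noteq> 0}"
    and t: "t \<longlonglongrightarrow> 0" "\<And>n. t n \<noteq> 0"
  shows "(\<lambda>n. \<integral>x. ((f (x - t n *\<^sub>R v) - f x) / t n) * \<phi> x \<partial>lborel)
         \<longlonglongrightarrow> (\<integral>x. - (g x \<bullet> v) * \<phi> x \<partial>lborel)"
proof (rule integral_dominated_convergence)
  have [measurable]: "f \<in> borel_measurable borel" "\<phi> \<in> borel_measurable borel"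
    using f \<phi> by (auto intro: borel_measurable_continuous_onI lipschitz_on_continuous_on)
  then show "(\<lambda>x. ((f (x - t n *\<^sub>R v) - f x) / t n) * \<phi> x) \<in> borel_measurable lborel"
    "(\<lambda>x. - (g x \<bullet> v) * \<phi> x) \<in> borel_measurable lborel" for n
    by measurable
  show "integrable lborel (\<lambda>x. L * norm v * \<bar>\<phi> x\<bar>)"
    by (intro integrable_lborel_bounded_support continuous_intros \<phi> bounded_subset[OF \<phi>(2)]) auto
  show "AE x in lborel. norm (((f (x - t n *\<^sub>R v) - f x) / t n) * \<phi> x) \<le> L * norm v * \<bar>\<phi> x\<bar>"
    for n
  proof (intro AE_I2)
    fix x
    have "\<bar>f (x - t n *\<^sub>R v) - f x\<bar> \<le> L * (\<bar>t n\<bar> * norm v)"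
      using lipschitz_onD[OF f, of "x - t n *\<^sub>R v" x] by (simp add: dist_real_def dist_norm)
    then have "\<bar>(f (x - t n *\<^sub>R v) - f x) / t n\<bar> \<le> L * norm v"
      using t(2)[of n] by (simp add: abs_divide divide_le_eq mult_ac)
    then show "norm (((f (x - t n *\<^sub>R v) - f x) / t n) * \<phi> x) \<le> L * norm v * \<bar>\<phi> x\<bar>"
      unfolding real_norm_def abs_mult by (rule mult_right_mono) simp
  qed
  have neg_t: "(\<lambda>n. - t n) \<longlonglongrightarrow> 0" "\<And>n. - t n \<noteq> 0"
    using tendsto_minus[OF t(1)] t(2) by auto
  show "AE x in lborel. (\<lambda>n. ((f (x - t n *\<^sub>R v) - f x) / t n) * \<phi> x) \<longlonglongrightarrow> - (g x \<bullet> v) * \<phi> x"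
    using der
  proof eventually_elim
    case (elim x)
    from LIMSEQ_directional_difference_quotient[OF elim neg_t, of v]
    have "(\<lambda>n. - ((f (x + (- t n) *\<^sub>R v) - f x) / (- t n))) \<longlonglongrightarrow> - (g x \<bullet> v)"
      by (intro tendsto_minus) simp
    then show ?case
      by (intro tendsto_mult[OF _ tendsto_const]) simp
  qed
qed

lemma weak_gradient_lipschitz:
  fixes f :: "'a::euclidean_space \<Rightarrow> real" and g :: "'a \<Rightarrow> 'a"
  assumes f: "L-lipschitz_on UNIV f" and g [measurable]: "g \<in> borel_measurable borel"
    and g_bounded: "\<And>x. norm (g x) \<le> C"
    and der: "AE x in lborel. (f has_derivative (\<lambda>h. g x \<bullet> h)) (at x)"
  shows "weak_gradient f g"
  unfolding weak_gradient_def
proof (intro conjI allI impI ballI)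
  have cont: "continuous_on UNIV f"
    using f by (rule lipschitz_on_continuous_on)
  then show "f \<in> borel_measurable borel"
    by (rule borel_measurable_continuous_onI)
  show "g \<in> borel_measurable borel" by (fact g)
  show "set_integrable lborel K f" if "compact K" for K
    unfolding set_integrable_def using that cont
    by (intro borel_integrable_compact) (auto intro: continuous_on_subset)
  show "set_integrable lborel K g" if "compact K" for K
    unfolding set_integrable_def
  proof (rule Bochner_Integration.integrable_bound)
    show "integrable lborel (\<lambda>x. C * indicator K x :: real)"
      using \<open>compact K\<close> by (intro integrable_mult_right integrable_real_indicator emeasure_bounded_finite
          compact_imp_bounded) (auto intro: borel_compact)
    show "AE x in lborel. norm (indicator K x *\<^sub>R g x) \<le> norm (C * indicator K x :: real)"
      using g_bounded order_trans[OF norm_ge_zero g_bounded] by (auto simp: indicator_def)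
  qed (use borel_compact[OF \<open>compact K\<close>] in measurable)
  show "(\<integral>x. f x * (d\<phi> x \<bullet> i) \<partial>lborel) = - (\<integral>x. (g x \<bullet> i) * \<phi> x \<partial>lborel)"
    if \<phi>: "test_fun \<phi> d\<phi>" for \<phi> d\<phi> i
  proof -
    define t where "t n = inverse (real (Suc n))" for n
    have t: "t \<longlonglongrightarrow> 0" "\<And>n. t n \<noteq> 0" "\<And>n. \<bar>t n\<bar> \<le> 1"
      using LIMSEQ_inverse_real_of_nat unfolding t_def by (auto simp: inverse_le_1_iff)
    obtain M where "M-lipschitz_on UNIV \<phi>"
      using test_fun_lipschitz[OF \<phi>] .
    then have \<phi>_cont: "continuous_on UNIV \<phi>"
      by (rule lipschitz_on_continuous_on)
    have \<phi>_supp: "bounded {x. \<phi> x \<noteq> 0}"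
      using \<phi> unfolding test_fun_def by blast
    have shift: "(\<integral>x. f x * ((\<phi> (x + t n *\<^sub>R i) - \<phi> x) / t n) \<partial>lborel)
          = (\<integral>x. ((f (x - t n *\<^sub>R i) - f x) / t n) * \<phi> x \<partial>lborel)" for n
      by (rule lborel_integral_mult_diff_quotient_shift[OF cont \<phi>_cont \<phi>_supp])
    have "(\<lambda>n. \<integral>x. f x * ((\<phi> (x + t n *\<^sub>R i) - \<phi> x) / t n) \<partial>lborel)
          \<longlonglongrightarrow> (\<integral>x. f x * (d\<phi> x \<bullet> i) \<partial>lborel)"
      by (rule LIMSEQ_integral_mult_diff_quotient[OF cont \<phi> t])
    then have "(\<lambda>n. \<integral>x. ((f (x - t n *\<^sub>R i) - f x) / t n) * \<phi> x \<partial>lborel)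
          \<longlonglongrightarrow> (\<integral>x. f x * (d\<phi> x \<bullet> i) \<partial>lborel)"
      unfolding shift .
    moreover have "(\<lambda>n. \<integral>x. ((f (x - t n *\<^sub>R i) - f x) / t n) * \<phi> x \<partial>lborel)
          \<longlonglongrightarrow> (\<integral>x. - (g x \<bullet> i) * \<phi> x \<partial>lborel)"
      by (rule LIMSEQ_integral_diff_quotient_mult[OF f g der \<phi>_cont \<phi>_supp t(1,2)])
    ultimately show ?thesis
      using LIMSEQ_unique by fastforce
  qed
qed

section \<open>Herbst's argument\<close>

lemma abs_exp_mult_diff_le:
  fixes y s l B R :: real
  assumes y: "\<bar>y\<bar> \<le> B" and s: "\<bar>s\<bar> \<le> R" and l: "\<bar>l\<bar> \<le> R"
  shows "\<bar>exp (s * y) - exp (l * y)\<bar> \<le> exp (R * B) * B * \<bar>s - l\<bar>"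
proof -
  have "0 \<le> R" using s by linarith
  then have "s * y \<le> R * B" "l * y \<le> R * B"
    using mult_mono[OF s y] mult_mono[OF l y] abs_ge_self[of "s * y"] abs_ge_self[of "l * y"]
    by (auto simp: abs_mult)
  then have "\<bar>exp (s * y) - exp (l * y)\<bar> \<le> exp (R * B) * \<bar>s * y - l * y\<bar>"
    using lipschitz_onD[OF exp_lipschitz_on_atMost[of "R * B"], of "s * y" "l * y"]
    by (simp add: dist_real_def)
  also have "\<bar>s * y - l * y\<bar> \<le> \<bar>s - l\<bar> * B"
    using y by (simp add: abs_mult mult_left_mono flip: left_diff_distrib)
  finally show ?thesis
    by (simp add: mult_left_mono mult_ac)
qed

lemma integrable_exp_mult_bounded:
  fixes G :: "'a \<Rightarrow> real"
  assumes "finite_measure M" and [measurable]: "G \<in> borel_measurable M"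
    and G_bounded: "\<And>x. x \<in> space M \<Longrightarrow> \<bar>G x\<bar> \<le> B"
  shows "integrable M (\<lambda>x. exp (s * G x))"
proof -
  interpret finite_measure M by fact
  have "s * G x \<le> \<bar>s\<bar> * B" if "x \<in> space M" for x
    using abs_ge_self[of "s * G x"] mult_left_mono[OF G_bounded[OF that], of "\<bar>s\<bar>"]
    by (simp add: abs_mult)
  then show ?thesis
    by (intro integrable_const_bound[where B="exp (\<bar>s\<bar> * B)"] AE_I2) auto
qed

lemma integral_exp_mult_pos:
  fixes G :: "'a \<Rightarrow> real"
  assumes "prob_space M" and [measurable]: "G \<in> borel_measurable M"
    and G_bounded: "\<And>x. x \<in> space M \<Longrightarrow> \<bar>G x\<bar> \<le> B"
  shows "0 < (\<integral>x. exp (s * G x) \<partial>M)"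
proof -
  interpret prob_space M by fact
  have "- (\<bar>s\<bar> * B) \<le> s * G x" if "x \<in> space M" for x
    using abs_ge_self[of "- (s * G x)"] mult_left_mono[OF G_bounded[OF that], of "\<bar>s\<bar>"]
    by (simp add: abs_mult)
  then have "(\<integral>x. exp (- (\<bar>s\<bar> * B)) \<partial>M) \<le> (\<integral>x. exp (s * G x) \<partial>M)"
    using integrable_exp_mult_bounded[OF finite_measure_axioms _ G_bounded]
    by (intro integral_mono) auto
  then show ?thesis
    by (simp add: prob_space less_le_trans[OF exp_gt_zero])
qed

lemma has_real_derivative_integral_exp_mult:
  fixes G :: "'a \<Rightarrow> real"
  assumes "finite_measure M" and [measurable]: "G \<in> borel_measurable M"
    and G_bounded: "\<And>x. x \<in> space M \<Longrightarrow> \<bar>G x\<bar> \<le> B"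
  shows "((\<lambda>s. \<integral>x. exp (s * G x) \<partial>M) has_real_derivative (\<integral>x. G x * exp (l * G x) \<partial>M)) (at l)"
  unfolding has_field_derivative_iff tendsto_at_iff_sequentially comp_def
proof (intro allI impI)
  interpret finite_measure M by fact
  fix X :: "nat \<Rightarrow> real"
  assume X: "\<forall>n. X n \<in> UNIV - {l}" and "X \<longlonglongrightarrow> l"
  then obtain K where K: "\<And>n. norm (X n) \<le> K"
    using convergent_imp_Bseq convergentI by (metis BseqE less_imp_le)
  define R where "R = max K \<bar>l\<bar>"
  have int: "integrable M (\<lambda>x. exp (s * G x))" for s
    by (rule integrable_exp_mult_bounded[OF finite_measure_axioms _ G_bounded]) simp
  have "(\<lambda>n. \<integral>x. (exp (X n * G x) - exp (l * G x)) / (X n - l) \<partial>M)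
        \<longlonglongrightarrow> (\<integral>x. G x * exp (l * G x) \<partial>M)"
  proof (rule integral_dominated_convergence[where w="\<lambda>x. exp (R * B) * B"])
    have X_l: "(\<lambda>n. X n - l) \<longlonglongrightarrow> 0" "\<And>n. X n - l \<noteq> 0"
      using tendsto_diff[OF \<open>X \<longlonglongrightarrow> l\<close> tendsto_const[of l]] X by auto
    show "AE x in M. (\<lambda>n. (exp (X n * G x) - exp (l * G x)) / (X n - l)) \<longlonglongrightarrow> G x * exp (l * G x)"
    proof (rule AE_I2)
      fix x
      have "((\<lambda>s. exp (s * G x)) has_real_derivative G x * exp (l * G x)) (at l)"
        by (auto intro!: derivative_eq_intros)
      from LIMSEQ_difference_quotient[OF this X_l]
      show "(\<lambda>n. (exp (X n * G x) - exp (l * G x)) / (X n - l)) \<longlonglongrightarrow> G x * exp (l * G x)"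
        by simp
    qed
    show "AE x in M. norm ((exp (X n * G x) - exp (l * G x)) / (X n - l)) \<le> exp (R * B) * B" for n
    proof (rule AE_I2)
      fix x assume "x \<in> space M"
      have "\<bar>exp (X n * G x) - exp (l * G x)\<bar> \<le> exp (R * B) * B * \<bar>X n - l\<bar>"
        using K[of n] G_bounded[OF \<open>x \<in> space M\<close>]
        by (intro abs_exp_mult_diff_le) (auto simp: R_def)
      then show "norm ((exp (X n * G x) - exp (l * G x)) / (X n - l)) \<le> exp (R * B) * B"
        using X by (simp add: abs_divide divide_le_eq)
    qed
  qed auto
  then show "(\<lambda>n. ((\<integral>x. exp (X n * G x) \<partial>M) - (\<integral>x. exp (l * G x) \<partial>M)) / (X n - l))
      \<longlonglongrightarrow> (\<integral>x. G x * exp (l * G x) \<partial>M)"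
    using int by simp
qed

lemma tendsto_ln_integral_exp_mult_div:
  fixes G :: "'a \<Rightarrow> real"
  assumes "prob_space M" and [measurable]: "G \<in> borel_measurable M"
    and G_bounded: "\<And>x. x \<in> space M \<Longrightarrow> \<bar>G x\<bar> \<le> B"
  shows "((\<lambda>s. ln (\<integral>x. exp (s * G x) \<partial>M) / s) \<longlongrightarrow> (\<integral>x. G x \<partial>M)) (at 0)"
proof -
  interpret prob_space M by fact
  define H where "H s = (\<integral>x. exp (s * G x) \<partial>M)" for s
  have "(H has_real_derivative (\<integral>x. G x * exp (0 * G x) \<partial>M)) (at 0)"
    unfolding H_def by (rule has_real_derivative_integral_exp_mult[OF finite_measure_axioms _ G_bounded]) simp
  moreover have "0 < H 0"
    unfolding H_def by (rule integral_exp_mult_pos[OF prob_space_axioms _ G_bounded]) simp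
  ultimately have "((\<lambda>s. ln (H s)) has_real_derivative (\<integral>x. G x \<partial>M) / H 0) (at 0)"
    using DERIV_chain2[OF DERIV_ln_divide] by fastforce
  then show ?thesis
    by (simp add: has_field_derivative_iff prob_space H_def)
qed

text \<open>Herbst's argument: the entropy bound makes \<open>ln H(s) / s - c s\<close> nonincreasing on \<open>s > 0\<close>,
  where \<open>H\<close> is the moment generating function of \<open>G\<close>, and its limit at \<open>0\<close> is the mean of \<open>G\<close>.\<close>

lemma herbst_argument:
  fixes G :: "'a \<Rightarrow> real"
  assumes "prob_space M" and [measurable]: "G \<in> borel_measurable M"
    and G_bounded: "\<And>x. x \<in> space M \<Longrightarrow> \<bar>G x\<bar> \<le> B"
    and entropy_bound: "\<And>s. s > 0 \<Longrightarrow>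
        s * (\<integral>x. G x * exp (s * G x) \<partial>M) - (\<integral>x. exp (s * G x) \<partial>M) * ln (\<integral>x. exp (s * G x) \<partial>M)
          \<le> c * s\<^sup>2 * (\<integral>x. exp (s * G x) \<partial>M)"
    and "l > 0"
  shows "ln (\<integral>x. exp (l * G x) \<partial>M) \<le> l * (\<integral>x. G x \<partial>M) + c * l\<^sup>2"
proof -
  interpret prob_space M by fact
  define H where "H s = (\<integral>x. exp (s * G x) \<partial>M)" for s
  define D where "D s = (\<integral>x. G x * exp (s * G x) \<partial>M)" for s
  define K where "K s = ln (H s) / s - c * s" for s
  have H_pos: "0 < H s" for s
    unfolding H_def by (rule integral_exp_mult_pos[OF prob_space_axioms _ G_bounded]) simp
  have K_deriv: "(K has_real_derivative (D s / H s * s - ln (H s) * 1) / (s * s) - c) (at s)"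
    if "s \<noteq> 0" for s
  proof -
    have "(H has_real_derivative D s) (at s)"
      unfolding H_def D_def
      by (rule has_real_derivative_integral_exp_mult[OF finite_measure_axioms _ G_bounded]) simp
    from DERIV_chain2[OF DERIV_ln_divide[OF H_pos[of s]] this]
    have ln_H: "((\<lambda>s. ln (H s)) has_real_derivative D s / H s) (at s)"
      by simp
    show ?thesis
      unfolding K_def by (intro DERIV_diff DERIV_divide DERIV_ident DERIV_cmult_Id ln_H that)
  qed
  have K_deriv_nonpos: "(D s / H s * s - ln (H s) * 1) / (s * s) - c \<le> 0" if "s > 0" for s
  proof -
    have "(D s / H s * s - ln (H s) * 1) / (s * s) = (s * D s - H s * ln (H s)) / (H s * s\<^sup>2)"
      using H_pos[of s] by (simp add: field_simps power2_eq_square)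
    also have "\<dots> \<le> c"
      using entropy_bound[OF that, folded H_def D_def] H_pos[of s] that
      by (simp add: divide_le_eq mult_ac)
    finally show ?thesis by simp
  qed
  have K_antimono: "K l \<le> K s" if "0 < s" "s \<le> l" for s
  proof (rule DERIV_nonpos_imp_nonincreasing[OF that(2)])
    fix x assume "s \<le> x" "x \<le> l"
    then have "x > 0" using that by linarith
    then show "\<exists>y. (K has_real_derivative y) (at x) \<and> y \<le> 0"
      using K_deriv[of x] K_deriv_nonpos[of x] by auto
  qed
  have "((\<lambda>s. ln (H s) / s) \<longlongrightarrow> (\<integral>x. G x \<partial>M)) (at_right 0)"
    unfolding H_def
    by (rule filterlim_mono[OF tendsto_ln_integral_exp_mult_div[OF prob_space_axioms _ G_bounded]])
       (auto simp: at_le)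
  then have "(K \<longlongrightarrow> (\<integral>x. G x \<partial>M) - c * 0) (at_right 0)"
    unfolding K_def by (intro tendsto_intros)
  moreover have "\<forall>\<^sub>F s in at_right 0. K l \<le> K s"
    using eventually_at_right_real[OF \<open>l > 0\<close>] by eventually_elim (use K_antimono in auto)
  ultimately have "K l \<le> (\<integral>x. G x \<partial>M)"
    by (intro tendsto_lowerbound) auto
  then have "ln (H l) / l \<le> (\<integral>x. G x \<partial>M) + c * l"
    unfolding K_def by linarith
  then have "ln (H l) \<le> ((\<integral>x. G x \<partial>M) + c * l) * l"
    using \<open>l > 0\<close> by (simp add: divide_le_eq)
  then show ?thesis
    by (simp add: H_def power2_eq_square algebra_simps)
qed

section \<open>Concentration under a logarithmic Sobolev inequality\<close>

lemma weak_gradient_exp_lipschitz: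
  fixes G :: "'a::euclidean_space \<Rightarrow> real"
  assumes G: "lip_grad_le G 1" and G_bounded: "\<And>x. \<bar>G x\<bar> \<le> B" and "0 \<le> l"
  obtains g where "weak_gradient (\<lambda>x. exp (l / 2 * G x)) g"
    and "\<And>x. norm (g x) \<le> l / 2 * exp (l / 2 * G x)"
proof -
  define f where "f x = exp (l / 2 * G x)" for x
  \<comment> \<open>The cutoff keeps \<open>g\<close> bounded; it is inactive wherever \<open>G\<close> is differentiable.\<close>
  define g where "g x = (if norm (diff_quotient_grad G x) \<le> 1
      then (l / 2 * f x) *\<^sub>R diff_quotient_grad G x else 0)" for x
  obtain L where L: "L-lipschitz_on UNIV G"
    using G unfolding lip_grad_le_def by blast
  have [measurable]: "G \<in> borel_measurable borel"
    using L by (intro borel_measurable_continuous_onI lipschitz_on_continuous_on)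
  have g_meas: "g \<in> borel_measurable borel"
    unfolding g_def f_def by measurable
  have g_le: "norm (g x) \<le> l / 2 * f x" for x
    using \<open>0 \<le> l\<close> by (auto simp: g_def f_def mult_left_le)
  have "l / 2 * G x \<le> l / 2 * B" for x
    using G_bounded[of x] \<open>0 \<le> l\<close> by (intro mult_left_mono) auto
  then have exp_lipschitz: "(exp (l / 2 * B))-lipschitz_on ((\<lambda>x. l / 2 * G x) ` UNIV) exp"
    by (intro lipschitz_on_subset[OF exp_lipschitz_on_atMost]) auto
  have f_lipschitz: "(exp (l / 2 * B) * (l / 2 * L))-lipschitz_on UNIV f"
    unfolding f_def using \<open>0 \<le> l\<close>
    by (intro lipschitz_on_compose2[OF lipschitz_on_cmult_real_nonneg[OF L] exp_lipschitz]) simp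
  have "l / 2 * f x \<le> l / 2 * exp (l / 2 * B)" for x
    unfolding f_def using \<open>0 \<le> l\<close> \<open>\<And>x. l / 2 * G x \<le> l / 2 * B\<close>[of x]
    by (intro mult_left_mono) auto
  then have g_bounded: "norm (g x) \<le> l / 2 * exp (l / 2 * B)" for x
    using g_le order_trans by blast
  have "AE x in lborel. (f has_derivative (\<lambda>h. g x \<bullet> h)) (at x)"
    using lip_grad_le_has_derivative[OF G]
  proof eventually_elim
    case (elim x)
    then obtain D where D: "(G has_derivative D) (at x)" "\<And>h. \<bar>D h\<bar> \<le> 1 * norm h"
      by blast
    define v where "v = diff_quotient_grad G x"
    have D_eq: "D = (\<lambda>h. v \<bullet> h)"
      unfolding v_def by (rule has_derivative_diff_quotient_grad[OF D(1)])
    have "norm v * norm v \<le> 1 * norm v"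
      using D(2)[of v] by (simp add: D_eq power2_norm_eq_inner[symmetric] power2_eq_square)
    then have "norm v \<le> 1"
      by (cases "v = 0") auto
    then have g_eq: "g x = (l / 2 * f x) *\<^sub>R v"
      by (simp add: g_def v_def)
    have "(f has_derivative (\<lambda>h. exp (l / 2 * G x) * (l / 2 * D h))) (at x)"
      unfolding f_def by (auto intro!: derivative_eq_intros D(1))
    then show ?case
      by (simp add: g_eq D_eq f_def mult_ac)
  qed
  then have "weak_gradient f g"
    by (rule weak_gradient_lipschitz[OF f_lipschitz g_meas g_bounded])
  then show thesis
    using that g_le unfolding f_def by blast
qed

lemma LSI_entropy_exp_le:
  fixes \<gamma> :: "'a::euclidean_space measure" and G :: "'a \<Rightarrow> real"
  assumes "prob_space \<gamma>" and sets_\<gamma> [measurable_cong]: "sets \<gamma> = sets borel"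
    and lsi: "LSI \<gamma> \<alpha>" and "0 \<le> \<alpha>"
    and G: "lip_grad_le G 1" and G_bounded: "\<And>x. \<bar>G x\<bar> \<le> B" and "0 < l"
  shows "l * (\<integral>x. G x * exp (l * G x) \<partial>\<gamma>) - (\<integral>x. exp (l * G x) \<partial>\<gamma>) * ln (\<integral>x. exp (l * G x) \<partial>\<gamma>)
         \<le> \<alpha> / 4 * l\<^sup>2 * (\<integral>x. exp (l * G x) \<partial>\<gamma>)"
proof -
  interpret prob_space \<gamma> by fact
  define H where "H = (\<integral>x. exp (l * G x) \<partial>\<gamma>)"
  obtain g where wg: "weak_gradient (\<lambda>x. exp (l / 2 * G x)) g"
    and g_le: "\<And>x. norm (g x) \<le> l / 2 * exp (l / 2 * G x)"
    using weak_gradient_exp_lipschitz[OF G G_bounded less_imp_le[OF \<open>0 < l\<close>]] by blast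
  have [measurable]: "G \<in> borel_measurable borel" "g \<in> borel_measurable borel"
    using wg lip_grad_le_continuous[OF G]
    by (auto simp: weak_gradient_def intro: borel_measurable_continuous_onI)
  have square: "(exp (l / 2 * G x))\<^sup>2 = exp (l * G x)" "(exp (l * G x / 2))\<^sup>2 = exp (l * G x)" for x
    by (simp_all flip: exp_double)
  have g_square_le: "(norm (g x))\<^sup>2 \<le> l\<^sup>2 / 4 * exp (l * G x)" for x
    using power_mono[OF g_le norm_ge_zero, where n=2] by (simp add: power_mult_distrib square power_divide)
  have int_exp: "integrable \<gamma> (\<lambda>x. exp (l * G x))"
    by (rule integrable_exp_mult_bounded[OF finite_measure_axioms _ G_bounded]) simp
  have int_g: "integrable \<gamma> (\<lambda>x. (norm (g x))\<^sup>2)"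
    using g_square_le
    by (intro Bochner_Integration.integrable_bound[OF integrable_mult_right[OF int_exp, of "l\<^sup>2 / 4"]]
        AE_I2) auto
  have "Ent \<gamma> (\<lambda>x. (exp (l / 2 * G x))\<^sup>2) \<le> \<alpha> * (\<integral>x. (norm (g x))\<^sup>2 \<partial>\<gamma>)"
    using lsi[unfolded LSI_def, rule_format, OF _ wg _ int_g] int_exp by (simp add: square)
  also have "\<dots> \<le> \<alpha> * (l\<^sup>2 / 4 * H)"
  proof (rule mult_left_mono[OF _ \<open>0 \<le> \<alpha>\<close>])
    have "(\<integral>x. (norm (g x))\<^sup>2 \<partial>\<gamma>) \<le> (\<integral>x. l\<^sup>2 / 4 * exp (l * G x) \<partial>\<gamma>)"
      using int_exp by (intro integral_mono int_g g_square_le) simp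
    then show "(\<integral>x. (norm (g x))\<^sup>2 \<partial>\<gamma>) \<le> l\<^sup>2 / 4 * H"
      by (simp add: H_def)
  qed
  also have "Ent \<gamma> (\<lambda>x. (exp (l / 2 * G x))\<^sup>2) = l * (\<integral>x. G x * exp (l * G x) \<partial>\<gamma>) - H * ln H"
    by (simp add: Ent_def square H_def mult_ac)
  finally show ?thesis
    by (simp add: H_def mult_ac)
qed

lemma LSI_integral_exp_le:
  fixes \<gamma> :: "'a::euclidean_space measure" and G :: "'a \<Rightarrow> real"
  assumes "prob_space \<gamma>" and sets_\<gamma> [measurable_cong]: "sets \<gamma> = sets borel"
    and lsi: "LSI \<gamma> \<alpha>" and "0 \<le> \<alpha>"
    and G: "lip_grad_le G 1" and G_bounded: "\<And>x. \<bar>G x\<bar> \<le> B" and "0 < l"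
  shows "(\<integral>x. exp (l * G x) \<partial>\<gamma>) \<le> exp (l * (\<integral>x. G x \<partial>\<gamma>) + \<alpha> / 4 * l\<^sup>2)"
proof -
  have [measurable]: "G \<in> borel_measurable borel"
    using lip_grad_le_continuous[OF G] by (rule borel_measurable_continuous_onI)
  have "ln (\<integral>x. exp (l * G x) \<partial>\<gamma>) \<le> l * (\<integral>x. G x \<partial>\<gamma>) + \<alpha> / 4 * l\<^sup>2"
    using LSI_entropy_exp_le[OF assms(1-4) G G_bounded]
    by (intro herbst_argument[OF \<open>prob_space \<gamma>\<close> _ G_bounded _ \<open>0 < l\<close>]) auto
  moreover have "0 < (\<integral>x. exp (l * G x) \<partial>\<gamma>)"
    using G_bounded by (intro integral_exp_mult_pos[OF \<open>prob_space \<gamma>\<close>]) auto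
  ultimately show ?thesis
    by (metis exp_le_cancel_iff exp_ln)
qed

lemma lip_grad_le_scaled_arctan:
  fixes F :: "'a::euclidean_space \<Rightarrow> real"
  assumes F: "lip_grad_le F 1" and "0 < c"
  shows "lip_grad_le (\<lambda>x. c * arctan (F x / c)) 1"
proof -
  obtain L where L: "L-lipschitz_on UNIV F"
    using F unfolding lip_grad_le_def by blast
  have "L-lipschitz_on UNIV (\<lambda>x. c * arctan (F x / c))"
  proof (rule lipschitz_onI)
    show "dist (c * arctan (F x / c)) (c * arctan (F y / c)) \<le> L * dist x y" for x y
      using abs_scaled_arctan_diff_le[OF \<open>0 < c\<close>, of "F x" "F y"] lipschitz_onD[OF L, of x y]
      by (simp add: dist_real_def)
  qed (rule lipschitz_on_nonneg[OF L])
  then show ?thesis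
  proof (rule lip_grad_leI)
    show "AE x in lborel. \<exists>D. ((\<lambda>x. c * arctan (F x / c)) has_derivative D) (at x)
        \<and> (\<forall>h. \<bar>D h\<bar> \<le> 1 * norm h)"
      using lip_grad_le_has_derivative[OF F]
    proof eventually_elim
      case (elim x)
      then obtain D where D: "(F has_derivative D) (at x)" "\<And>h. \<bar>D h\<bar> \<le> 1 * norm h"
        by blast
      define a where "a = inverse (1 + (F x / c)\<^sup>2)"
      have "0 \<le> a" "a \<le> 1"
        by (auto simp: a_def inverse_le_1_iff)
      then have "\<bar>a * D h\<bar> \<le> 1 * norm h" for h
        using D(2)[of h] by (auto simp: abs_mult intro: order_trans[OF mult_left_le_one_le])
      moreover have "((\<lambda>x. c * arctan (F x / c)) has_derivative (\<lambda>h. a * D h)) (at x)"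
        using \<open>0 < c\<close> unfolding a_def by (auto intro!: derivative_eq_intros D(1))
      ultimately show ?case by blast
    qed
  qed
qed

text \<open>For unbounded \<open>F\<close>, apply the bounded case to the truncations \<open>n arctan (F / n)\<close> and pass to
  the limit with Fatou's lemma.\<close>

lemma LSI_nn_integral_exp_le:
  fixes \<gamma> :: "'a::euclidean_space measure" and F :: "'a \<Rightarrow> real"
  assumes "prob_space \<gamma>" and sets_\<gamma> [measurable_cong]: "sets \<gamma> = sets borel"
    and lsi: "LSI \<gamma> \<alpha>" and "0 \<le> \<alpha>"
    and F: "lip_grad_le F 1" and F_int: "integrable \<gamma> F" and "0 < l"
  shows "(\<integral>\<^sup>+x. exp (l * F x) \<partial>\<gamma>) \<le> ennreal (exp (l * (\<integral>x. F x \<partial>\<gamma>) + \<alpha> / 4 * l\<^sup>2))"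
proof -
  interpret prob_space \<gamma> by fact
  define G where "G n x = real (Suc n) * arctan (F x / real (Suc n))" for n x
  have [measurable]: "F \<in> borel_measurable borel"
    using lip_grad_le_continuous[OF F] by (rule borel_measurable_continuous_onI)
  have [measurable]: "G n \<in> borel_measurable borel" for n
    unfolding G_def by measurable
  have G_lim: "(\<lambda>n. G n x) \<longlonglongrightarrow> F x" for x
    unfolding G_def by (rule LIMSEQ_scaled_arctan)
  have G_abs_le: "\<bar>G n x\<bar> \<le> \<bar>F x\<bar>" for n x
    using abs_scaled_arctan_diff_le[of "real (Suc n)" "F x" 0] by (simp add: G_def)
  have G_bounded: "\<bar>G n x\<bar> \<le> real (Suc n) * (pi / 2)" for n x
  proof -
    have "\<bar>arctan (F x / real (Suc n))\<bar> \<le> pi / 2"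
      using arctan_bounded[of "F x / real (Suc n)"] unfolding abs_le_iff by linarith
    then show ?thesis
      by (simp add: G_def abs_mult mult_left_mono del: of_nat_Suc)
  qed
  have G_exp: "(\<integral>x. exp (l * G n x) \<partial>\<gamma>) \<le> exp (l * (\<integral>x. G n x \<partial>\<gamma>) + \<alpha> / 4 * l\<^sup>2)" for n
    unfolding G_def
    by (rule LSI_integral_exp_le[OF assms(1-4) lip_grad_le_scaled_arctan[OF F]
          G_bounded[of n, unfolded G_def] \<open>0 < l\<close>]) simp
  have "(\<lambda>n. \<integral>x. G n x \<partial>\<gamma>) \<longlonglongrightarrow> (\<integral>x. F x \<partial>\<gamma>)"
    using G_abs_le G_lim
    by (intro integral_dominated_convergence[where w="\<lambda>x. \<bar>F x\<bar>"] integrable_abs F_int) auto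
  then have limit: "(\<lambda>n. ennreal (exp (l * (\<integral>x. G n x \<partial>\<gamma>) + \<alpha> / 4 * l\<^sup>2)))
      \<longlonglongrightarrow> ennreal (exp (l * (\<integral>x. F x \<partial>\<gamma>) + \<alpha> / 4 * l\<^sup>2))"
    by (intro tendsto_intros)
  have "(\<integral>\<^sup>+x. exp (l * F x) \<partial>\<gamma>) = (\<integral>\<^sup>+x. liminf (\<lambda>n. ennreal (exp (l * G n x))) \<partial>\<gamma>)"
    using G_lim by (intro nn_integral_cong lim_imp_Liminf[symmetric]) (auto intro!: tendsto_intros)
  also have "\<dots> \<le> liminf (\<lambda>n. \<integral>\<^sup>+x. exp (l * G n x) \<partial>\<gamma>)"
    by (rule nn_integral_liminf) simp
  also have "\<dots> \<le> liminf (\<lambda>n. ennreal (exp (l * (\<integral>x. G n x \<partial>\<gamma>) + \<alpha> / 4 * l\<^sup>2)))"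
  proof (intro Liminf_mono always_eventually allI)
    fix n
    have "integrable \<gamma> (\<lambda>x. exp (l * G n x))"
      by (rule integrable_exp_mult_bounded[OF finite_measure_axioms _ G_bounded]) simp
    then show "(\<integral>\<^sup>+x. exp (l * G n x) \<partial>\<gamma>) \<le> ennreal (exp (l * (\<integral>x. G n x \<partial>\<gamma>) + \<alpha> / 4 * l\<^sup>2))"
      using G_exp[of n] by (simp add: nn_integral_eq_integral ennreal_leI)
  qed
  also have "\<dots> = ennreal (exp (l * (\<integral>x. F x \<partial>\<gamma>) + \<alpha> / 4 * l\<^sup>2))"
    using limit by (rule lim_imp_Liminf[OF trivial_limit_sequentially])
  finally show ?thesis .
qed

lemma LSI_concentration:
  fixes \<gamma> :: "'a::euclidean_space measure" and F :: "'a \<Rightarrow> real"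
  assumes "prob_space \<gamma>" and sets_\<gamma> [measurable_cong]: "sets \<gamma> = sets borel"
    and lsi: "LSI \<gamma> \<alpha>" and "0 < \<alpha>"
    and F: "lip_grad_le F 1" and F_int: "integrable \<gamma> F" and "0 < r"
  shows "measure \<gamma> {x. r \<le> F x - (\<integral>y. F y \<partial>\<gamma>)} \<le> exp (- (r\<^sup>2 / \<alpha>))"
proof -
  interpret prob_space \<gamma> by fact
  define m where "m = (\<integral>y. F y \<partial>\<gamma>)"
  \<comment> \<open>the minimiser of \<open>- l r + \<alpha> l\<^sup>2 / 4\<close>, the exponent of the Chernoff bound\<close>
  define l where "l = 2 * r / \<alpha>"
  have "0 < l" using \<open>0 < r\<close> \<open>0 < \<alpha>\<close> by (simp add: l_def)
  have [measurable]: "F \<in> borel_measurable borel"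
    using lip_grad_le_continuous[OF F] by (rule borel_measurable_continuous_onI)
  have space: "space \<gamma> = UNIV"
    using sets_eq_imp_space_eq[OF sets_\<gamma>] by simp
  have "(\<integral>\<^sup>+x. ennreal (exp (l * (F x - m))) * indicator (space \<gamma>) x \<partial>\<gamma>)
      = ennreal (exp (- l * m)) * (\<integral>\<^sup>+x. exp (l * F x) \<partial>\<gamma>)"
    by (simp add: space right_diff_distrib exp_diff exp_minus divide_inverse mult.commute
        ennreal_mult' nn_integral_cmult)
  also have "\<dots> \<le> ennreal (exp (- l * m)) * ennreal (exp (l * m + \<alpha> / 4 * l\<^sup>2))"
    using LSI_nn_integral_exp_le[OF assms(1-3) less_imp_le[OF \<open>0 < \<alpha>\<close>] F F_int \<open>0 < l\<close>]
    by (intro mult_left_mono) (auto simp: m_def)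
  finally have mgf: "(\<integral>\<^sup>+x. ennreal (exp (l * (F x - m))) * indicator (space \<gamma>) x \<partial>\<gamma>)
      \<le> ennreal (exp (- l * m)) * ennreal (exp (l * m + \<alpha> / 4 * l\<^sup>2))" .
  have "emeasure \<gamma> {x \<in> space \<gamma>. r \<le> F x - m}
      \<le> ennreal (exp (- l * r)) * (\<integral>\<^sup>+x. ennreal (exp (l * (F x - m))) * indicator (space \<gamma>) x \<partial>\<gamma>)"
    using \<open>0 < l\<close> by (intro Chernoff_ineq_nn_integral_ge) auto
  also have "\<dots> \<le> ennreal (exp (- l * r)) * (ennreal (exp (- l * m)) * ennreal (exp (l * m + \<alpha> / 4 * l\<^sup>2)))"
    using mgf by (rule mult_left_mono) simp
  also have "\<dots> = ennreal (exp (- (r\<^sup>2 / \<alpha>)))"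
    using \<open>0 < \<alpha>\<close>
    by (simp add: l_def power2_eq_square field_simps flip: ennreal_mult exp_add)
  finally show ?thesis
    by (simp add: space m_def emeasure_eq_measure)
qed

section \<open>Transfer to the dominated measure\<close>

lemma W1_ge_abs_integral_diff:
  assumes "lip_grad_le F 1" "integrable \<mu> F" "integrable \<gamma> F"
  shows "ereal \<bar>(\<integral>x. F x \<partial>\<mu>) - (\<integral>x. F x \<partial>\<gamma>)\<bar> \<le> W1 \<mu> \<gamma>"
  unfolding W1_def using assms by (intro SUP_upper2[of F]) auto

lemma W1_eq_infinity_if_not_integrable:
  assumes "lip_grad_le F 1" "\<not> (integrable \<mu> F \<and> integrable \<gamma> F)"
  shows "W1 \<mu> \<gamma> = \<infinity>"
proof -
  have "\<infinity> \<le> W1 \<mu> \<gamma>"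
    unfolding W1_def using assms by (intro SUP_upper2[of F]) auto
  then show ?thesis by simp
qed

lemma measure_density_le_cmult:
  fixes f g :: "'a \<Rightarrow> real"
  assumes [measurable]: "f \<in> borel_measurable M" "g \<in> borel_measurable M" "A \<in> sets M"
    and "finite_measure (density M g)" and "0 \<le> c"
    and g_nonneg: "\<And>x. x \<in> space M \<Longrightarrow> 0 \<le> g x" and le: "\<And>x. x \<in> space M \<Longrightarrow> f x \<le> c * g x"
  shows "measure (density M f) A \<le> c * measure (density M g) A"
proof -
  have "emeasure (density M f) A = (\<integral>\<^sup>+x. ennreal (f x) * indicator A x \<partial>M)"
    by (rule emeasure_density) auto
  also have "\<dots> \<le> (\<integral>\<^sup>+x. ennreal c * (ennreal (g x) * indicator A x) \<partial>M)"
    using le g_nonneg \<open>0 \<le> c\<close>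
    by (intro nn_integral_mono) (auto simp: indicator_def ennreal_leI simp flip: ennreal_mult)
  also have "\<dots> = ennreal c * emeasure (density M g) A"
    by (simp add: nn_integral_cmult emeasure_density)
  finally have "emeasure (density M f) A \<le> ennreal c * emeasure (density M g) A" .
  moreover have "ennreal c * emeasure (density M g) A < top"
    using finite_measure.emeasure_finite[OF \<open>finite_measure (density M g)\<close>, of A]
    by (simp add: ennreal_mult_less_top less_top)
  ultimately have "enn2real (emeasure (density M f) A) \<le> enn2real (ennreal c * emeasure (density M g) A)"
    by (rule enn2real_mono)
  then show ?thesis
    using \<open>0 \<le> c\<close> by (simp add: measure_def enn2real_mult)
qed

theorem proposition3p2:
  fixes m q F :: "'a::euclidean_space \<Rightarrow> real" and \<alpha> \<kappa> r :: real
  defines "\<mu> \<equiv> density lborel (\<lambda>x. ennreal (m x))"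
      and "\<gamma> \<equiv> density lborel (\<lambda>x. ennreal (q x))"
  assumes m_meas: "m \<in> borel_measurable borel" and m_nonneg: "\<forall>x. m x \<ge> 0"
      and q_meas: "q \<in> borel_measurable borel" and q_nonneg: "\<forall>x. q x \<ge> 0"
      and mu_prob: "prob_space \<mu>" and gamma_prob: "prob_space \<gamma>"
      and alpha_pos: "\<alpha> > 0" and lsi: "LSI \<gamma> \<alpha>"
      and kappa: "\<kappa> \<ge> 1" and dom: "\<forall>x. m x \<le> \<kappa> * q x"
      and F: "lip_grad_le F 1"
      and r: "r > 0"
  shows "measure \<mu> {x. ereal (F x - (\<integral>y. F y \<partial>\<mu>)) \<ge> ereal r + W1 \<mu> \<gamma>}
           \<le> \<kappa> * exp (- (r\<^sup>2 / \<alpha>))"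
proof (cases "W1 \<mu> \<gamma> = \<infinity>")
  case True
  then show ?thesis using kappa by simp
next
  case False
  then have int: "integrable \<mu> F" "integrable \<gamma> F"
    using W1_eq_infinity_if_not_integrable[OF F] by blast+
  have "ereal \<bar>(\<integral>x. F x \<partial>\<mu>) - (\<integral>x. F x \<partial>\<gamma>)\<bar> \<le> W1 \<mu> \<gamma>"
    by (rule W1_ge_abs_integral_diff[OF F int])
  then obtain w where w: "W1 \<mu> \<gamma> = ereal w" "\<bar>(\<integral>x. F x \<partial>\<mu>) - (\<integral>x. F x \<partial>\<gamma>)\<bar> \<le> w"
    using False by (cases "W1 \<mu> \<gamma>") auto
  define T where "T = {x. r \<le> F x - (\<integral>y. F y \<partial>\<gamma>)}"
  have [measurable]: "F \<in> borel_measurable borel"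
    using lip_grad_le_continuous[OF F] by (rule borel_measurable_continuous_onI)
  have [measurable]: "T \<in> sets borel"
    unfolding T_def by measurable
  have "{x. ereal (F x - (\<integral>y. F y \<partial>\<mu>)) \<ge> ereal r + W1 \<mu> \<gamma>} \<subseteq> T"
    using w by (auto simp: T_def)
  then have "measure \<mu> {x. ereal (F x - (\<integral>y. F y \<partial>\<mu>)) \<ge> ereal r + W1 \<mu> \<gamma>} \<le> measure \<mu> T"
    using mu_prob by (intro finite_measure.finite_measure_mono prob_space.finite_measure) (auto simp: \<mu>_def)
  also have "\<dots> \<le> \<kappa> * measure \<gamma> T"
    unfolding \<mu>_def \<gamma>_def using m_meas q_meas gamma_prob kappa q_nonneg dom
    by (intro measure_density_le_cmult) (auto simp: \<gamma>_def prob_space.finite_measure)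
  also have "\<dots> \<le> \<kappa> * exp (- (r\<^sup>2 / \<alpha>))"
    using LSI_concentration[OF gamma_prob _ lsi alpha_pos F int(2) r] kappa
    by (intro mult_left_mono) (auto simp: \<gamma>_def T_def)
  finally show ?thesis .
qed

end
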